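(* Let $X$ be a Polish space and $T$ a continuous self-map of $X$ admitting an invariant Borel probability measure $m$. Let $\mathbf G$ be a compact abelian group acting continuously on $X$, and assume that $T(gx)=\beta(g)T(x)$ for all $g\in\mathbf G$ and $x\in X$, where $\beta:\mathbf G\to\mathbf G$ is a continuous map preserving the Haar measure of $\mathbf G$. Define $\widetilde m(A)=\int_{\mathbf G}m(g^{-1}A)\,dg$ for Borel $A\subseteq X$, where $dg$ is the normalized Haar measure. Then $\widetilde m$ is $\mathbf G$-invariant, and for every $g\in\mathbf G$ it is invariant under both maps $x\mapsto gT(x)$ and $x\mapsto T(gx)$.
   Context: A measure $m$ is invariant under a Borel map $S$ if $m(S^{-1}A)=m(A)$ for all Borel $A$; $\mathbf G$-invariance means $\widetilde m(gA)=\widetilde m(A)$ for all $g$ and Borel $A$. *)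

theory Defs
  imports "HOL-Probability.Probability"
begin

text \<open>The compact abelian group G is written additively (type class
  topological_ab_group_add), so g^{-1} is uminus g and the action g x is act g x.\<close>

definition normalized_haar :: "('g::topological_ab_group_add) measure \<Rightarrow> bool" where
  "normalized_haar H \<longleftrightarrow> prob_space H \<and> sets H = sets borel \<and>
     (\<forall>g. \<forall>A\<in>sets borel. emeasure H ((\<lambda>h. g + h) ` A) = emeasure H A)"

definition mtilde :: "'g measure \<Rightarrow> ('g::ab_group_add \<Rightarrow> 'x \<Rightarrow> 'x) \<Rightarrow> 'x measure \<Rightarrow> 'x set \<Rightarrow> ennreal" where
  "mtilde H act m A = (\<integral>\<^sup>+ g. emeasure m (act (- g) ` A) \<partial>H)"

end

theory Submission
  imports Defs
begin

text \<open>Put \<open>\<phi>\<^sub>A k = m (act k -` A)\<close>, so that \<open>m~(A)\<close> is the Haar integral of \<open>\<phi>\<^sub>A\<close>.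
  For each of the three maps \<open>S\<close> there is a Haar-preserving map \<open>\<psi>\<close> of the group with
  \<open>\<phi>\<^bsub>S -` A\<^esub> = \<phi>\<^sub>A \<circ> \<psi>\<close>: a translation for \<open>S = act g\<close>, and \<open>\<beta>\<close> composed with a
  translation for \<open>act g \<circ> T\<close> and \<open>T \<circ> act g\<close>, using the \<open>T\<close>-invariance of \<open>m\<close> and
  \<open>T \<circ> act k = act (\<beta> k) \<circ> T\<close>. Changing variables by \<open>\<psi>\<close> in the Haar integral gives the
  invariance. By joint continuity of the action, \<open>\<phi>\<^sub>A\<close> is the section measure of a set
  in the product \<open>\<sigma>\<close>-algebra, hence measurable.\<close>

lemma open_in_sets_pair_borel:
  fixes W :: "('a::topological_space \<times> 'b::second_countable_topology) set"
  assumes "open W"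
  shows "W \<in> sets (borel \<Otimes>\<^sub>M borel)"
proof -
  obtain B :: "'b set set" where B: "countable B" "topological_basis B"
    using ex_countable_basis by blast
  define U where "U V = \<Union>{S. open S \<and> S \<times> V \<subseteq> W}" for V
  have "W = (\<Union>V\<in>B. U V \<times> V)"
  proof
    show "W \<subseteq> (\<Union>V\<in>B. U V \<times> V)"
    proof
      fix p assume "p \<in> W"
      then obtain S R where SR: "open S" "open R" "p \<in> S \<times> R" "S \<times> R \<subseteq> W"
        using open_prod_elim[OF assms] by metis
      obtain V where V: "V \<in> B" "snd p \<in> V" "V \<subseteq> R"
        using topological_basisE[OF B(2) SR(2)] SR(3) by (metis mem_Times_iff)
      have "S \<times> V \<subseteq> W" using SR(4) V(3) by blast
      hence "fst p \<in> U V" unfolding U_def using SR(1,3) by auto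
      thus "p \<in> (\<Union>V\<in>B. U V \<times> V)" using V by (metis UN_I mem_Times_iff)
    qed
  qed (auto simp: U_def)
  moreover have "(\<Union>V\<in>B. U V \<times> V) \<in> sets (borel \<Otimes>\<^sub>M borel)"
  proof (rule sets.countable_UN'')
    fix V assume "V \<in> B"
    hence "open V" using B(2) topological_basis_open by blast
    moreover have "open (U V)" unfolding U_def by auto
    ultimately show "U V \<times> V \<in> sets (borel \<Otimes>\<^sub>M borel)" by auto
  qed (fact B(1))
  ultimately show ?thesis by simp
qed

lemma continuous_on_imp_measurable_pair_borel:
  fixes f :: "'a::topological_space \<times> 'b::second_countable_topology \<Rightarrow> 'c::topological_space"
  assumes "continuous_on UNIV f"
  shows "f \<in> borel_measurable (borel \<Otimes>\<^sub>M borel)"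
proof (rule borel_measurableI)
  fix S :: "'c set" assume "open S"
  hence "open (f -` S)" using assms by (simp add: continuous_on_open_vimage)
  thus "f -` S \<inter> space (borel \<Otimes>\<^sub>M borel) \<in> sets (borel \<Otimes>\<^sub>M borel)"
    by (simp add: open_in_sets_pair_borel)
qed

lemma borel_measurable_emeasure_vimage_section:
  fixes f :: "'a::topological_space \<times> 'b::second_countable_topology \<Rightarrow> 'c::topological_space"
  assumes f: "continuous_on UNIV f"
    and M: "sigma_finite_measure M" "sets M = sets borel"
    and A: "A \<in> sets borel"
  shows "(\<lambda>a. emeasure M ((\<lambda>b. f (a, b)) -` A)) \<in> borel_measurable borel"
proof -
  interpret M: sigma_finite_measure M by (fact M(1))
  let ?Q = "f -` A \<inter> space (borel \<Otimes>\<^sub>M borel)"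
  have "?Q \<in> sets (borel \<Otimes>\<^sub>M borel)"
    using measurable_sets[OF continuous_on_imp_measurable_pair_borel[OF f] A] .
  also have "sets (borel \<Otimes>\<^sub>M borel) = sets ((borel::'a measure) \<Otimes>\<^sub>M M)"
    using M(2) by (intro sets_pair_measure_cong) auto
  finally have "(\<lambda>a. emeasure M (Pair a -` ?Q)) \<in> borel_measurable borel"
    by (rule M.measurable_emeasure_Pair)
  moreover have "Pair a -` ?Q = (\<lambda>b. f (a, b)) -` A" for a
    by (auto simp: space_pair_measure)
  ultimately show ?thesis by simp
qed

lemma distr_self_if_emeasure_vimage_eq:
  assumes f: "f \<in> M \<rightarrow>\<^sub>M M"
    and eq: "\<And>A. A \<in> sets M \<Longrightarrow> emeasure M (f -` A \<inter> space M) = emeasure M A"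
  shows "distr M M f = M"
  by (rule measure_eqI) (simp_all add: emeasure_distr[OF f] eq)

lemma distr_self_comp:
  assumes "f \<in> M \<rightarrow>\<^sub>M M" "g \<in> M \<rightarrow>\<^sub>M M" "distr M M f = M" "distr M M g = M"
  shows "distr M M (f \<circ> g) = M"
  using assms by (metis distr_distr)

lemma normalized_haar_measurable_add:
  assumes "normalized_haar H"
  shows "(\<lambda>h. h + c) \<in> H \<rightarrow>\<^sub>M H"
proof -
  have sets_H: "sets H = sets borel" using assms unfolding normalized_haar_def by simp
  show ?thesis unfolding measurable_cong_sets[OF sets_H sets_H]
    by (intro borel_measurable_continuous_onI continuous_intros)
qed

lemma normalized_haar_distr_add:
  assumes haar: "normalized_haar H"
  shows "distr H H (\<lambda>h. h + c) = H"
proof (rule distr_self_if_emeasure_vimage_eq[OF normalized_haar_measurable_add[OF haar]])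
  fix B assume "B \<in> sets H"
  moreover have "space H = UNIV" "sets H = sets borel"
    using haar unfolding normalized_haar_def by (auto dest: sets_eq_imp_space_eq)
  moreover have "(\<lambda>h. h + c) -` B = (+) (- c) ` B"
  proof
    show "(\<lambda>h. h + c) -` B \<subseteq> (+) (- c) ` B"
      by (auto intro: image_eqI[where x = "_ + c"])
  qed auto
  moreover have "emeasure H ((+) (- c) ` B) = emeasure H B" if "B \<in> sets borel"
    using haar that unfolding normalized_haar_def by blast
  ultimately show "emeasure H ((\<lambda>h. h + c) -` B \<inter> space H) = emeasure H B"
    by (simp only: Int_UNIV_right)
qed

locale haar_average =
  fixes act :: "'g::topological_ab_group_add \<Rightarrow> 'x::second_countable_topology \<Rightarrow> 'x"
    and H :: "'g measure"
    and m :: "'x measure"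
  assumes act_zero: "act 0 x = x"
    and act_add: "act (g + h) x = act g (act h x)"
    and continuous_act: "continuous_on UNIV (\<lambda>p. act (fst p) (snd p))"
    and haar: "normalized_haar H"
    and sigma_finite_m: "sigma_finite_measure m"
    and sets_m: "sets m = sets borel"
begin

lemma sets_H: "sets H = sets borel"
  using haar unfolding normalized_haar_def by simp

lemma vimage_act_in_borel:
  assumes "A \<in> sets borel"
  shows "act g -` A \<in> sets borel"
proof -
  have "continuous_on UNIV ((\<lambda>p. act (fst p) (snd p)) \<circ> Pair g)"
    by (intro continuous_on_compose continuous_intros continuous_on_subset[OF continuous_act]) auto
  thus ?thesis
    using measurable_sets[OF borel_measurable_continuous_onI assms] by simp
qed

lemma image_act_eq_vimage: "act (- g) ` A = act g -` A"
proof
  show "act (- g) ` A \<subseteq> act g -` A"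
    by (auto simp flip: act_add simp: act_zero)
  show "act g -` A \<subseteq> act (- g) ` A"
  proof
    fix x assume "x \<in> act g -` A"
    moreover have "x = act (- g) (act g x)"
      by (metis act_add act_zero add.left_inverse)
    ultimately show "x \<in> act (- g) ` A" by blast
  qed
qed

lemma mtilde_eq_nn_integral_vimage: "mtilde H act m A = (\<integral>\<^sup>+ k. emeasure m (act k -` A) \<partial>H)"
  unfolding mtilde_def image_act_eq_vimage ..

lemma mtilde_eq_if_emeasure_vimage_act_eq:
  assumes \<psi>: "\<psi> \<in> H \<rightarrow>\<^sub>M H" "distr H H \<psi> = H"
    and A: "A \<in> sets borel"
    and eq: "\<And>k. emeasure m (act k -` A') = emeasure m (act (\<psi> k) -` A)"
  shows "mtilde H act m A' = mtilde H act m A"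
proof -
  have "(\<lambda>k. emeasure m (act k -` A)) \<in> borel_measurable H"
    unfolding measurable_cong_sets[OF sets_H refl]
    using borel_measurable_emeasure_vimage_section[OF continuous_act sigma_finite_m sets_m A]
    by simp
  thus ?thesis
    using nn_integral_distr[OF \<psi>(1)] by (simp add: mtilde_eq_nn_integral_vimage eq \<psi>(2))
qed

lemma mtilde_image_act:
  assumes "A \<in> sets borel"
  shows "mtilde H act m (act g ` A) = mtilde H act m A"
proof (rule mtilde_eq_if_emeasure_vimage_act_eq)
  show "(\<lambda>h. h + - g) \<in> H \<rightarrow>\<^sub>M H" "distr H H (\<lambda>h. h + - g) = H"
    using normalized_haar_measurable_add normalized_haar_distr_add haar by blast+
  fix k
  have "act (- g) (act k x) = act (k + - g) x" for x
    by (metis act_add add.commute)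
  hence "act k -` act g ` A = act (k + - g) -` A"
    using image_act_eq_vimage[of "- g"] by auto
  thus "emeasure m (act k -` act g ` A) = emeasure m (act (k + - g) -` A)"
    by simp
qed (fact assms)

context
  fixes T :: "'x \<Rightarrow> 'x" and \<beta> :: "'g \<Rightarrow> 'g"
  assumes T_preserves_m: "\<And>A. A \<in> sets borel \<Longrightarrow> emeasure m (T -` A) = emeasure m A"
    and equivariant: "\<And>g x. T (act g x) = act (\<beta> g) (T x)"
    and \<beta>_measurable: "\<beta> \<in> H \<rightarrow>\<^sub>M H"
    and \<beta>_preserves_H: "distr H H \<beta> = H"
begin

lemma mtilde_vimage_act_comp:
  assumes A: "A \<in> sets borel"
  shows "mtilde H act m ((\<lambda>x. act g (T x)) -` A) = mtilde H act m A"
proof (rule mtilde_eq_if_emeasure_vimage_act_eq)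
  show "(\<lambda>h. h + g) \<circ> \<beta> \<in> H \<rightarrow>\<^sub>M H"
    by (rule measurable_comp[OF \<beta>_measurable normalized_haar_measurable_add[OF haar]])
  show "distr H H ((\<lambda>h. h + g) \<circ> \<beta>) = H"
    by (intro distr_self_comp normalized_haar_measurable_add[OF haar]
        normalized_haar_distr_add[OF haar] \<beta>_measurable \<beta>_preserves_H)
  fix k
  have "act k -` (\<lambda>x. act g (T x)) -` A = T -` act (\<beta> k + g) -` A"
    by (auto simp: equivariant act_add add.commute)
  thus "emeasure m (act k -` (\<lambda>x. act g (T x)) -` A) = emeasure m (act (((\<lambda>h. h + g) \<circ> \<beta>) k) -` A)"
    using T_preserves_m[OF vimage_act_in_borel[OF A]] by simp
qed (fact A)

lemma mtilde_vimage_comp_act: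
  assumes A: "A \<in> sets borel"
  shows "mtilde H act m ((\<lambda>x. T (act g x)) -` A) = mtilde H act m A"
proof (rule mtilde_eq_if_emeasure_vimage_act_eq)
  show "\<beta> \<circ> (\<lambda>h. h + g) \<in> H \<rightarrow>\<^sub>M H"
    by (rule measurable_comp[OF normalized_haar_measurable_add[OF haar] \<beta>_measurable])
  show "distr H H (\<beta> \<circ> (\<lambda>h. h + g)) = H"
    by (intro distr_self_comp normalized_haar_measurable_add[OF haar]
        normalized_haar_distr_add[OF haar] \<beta>_measurable \<beta>_preserves_H)
  fix k
  have "T (act g (act k x)) = act (\<beta> (k + g)) (T x)" for x
    by (metis act_add add.commute equivariant)
  hence "act k -` (\<lambda>x. T (act g x)) -` A = T -` act (\<beta> (k + g)) -` A"
    by auto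
  thus "emeasure m (act k -` (\<lambda>x. T (act g x)) -` A) = emeasure m (act ((\<beta> \<circ> (\<lambda>h. h + g)) k) -` A)"
    using T_preserves_m[OF vimage_act_in_borel[OF A]] by simp
qed (fact A)

end

end

theorem proposition6p1:
  fixes T :: "'x::polish_space \<Rightarrow> 'x"
    and m :: "'x measure"
    and act :: "'g::{topological_ab_group_add, t2_space} \<Rightarrow> 'x \<Rightarrow> 'x"
    and \<beta> :: "'g \<Rightarrow> 'g"
    and H :: "'g measure"
  assumes T_cont: "continuous_on UNIV T"
    and m_prob: "prob_space m" and m_sets: "sets m = sets borel"
    and m_inv: "\<forall>A\<in>sets borel. emeasure m (T -` A) = emeasure m A"
    and G_compact: "compact (UNIV :: 'g set)"
    and act_cont: "continuous_on UNIV (\<lambda>p::'g \<times> 'x. act (fst p) (snd p))"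
    and act_zero: "\<forall>x. act 0 x = x"
    and act_add: "\<forall>g h x. act (g + h) x = act g (act h x)"
    and equivariant: "\<forall>g x. T (act g x) = act (\<beta> g) (T x)"
    and \<beta>_cont: "continuous_on UNIV \<beta>"
    and haar: "normalized_haar H"
    and \<beta>_haar: "\<forall>A\<in>sets borel. emeasure H (\<beta> -` A) = emeasure H A"
  shows "(\<forall>g. \<forall>A\<in>sets borel. mtilde H act m (act g ` A) = mtilde H act m A)
       \<and> (\<forall>g. \<forall>A\<in>sets borel. mtilde H act m ((\<lambda>x. act g (T x)) -` A) = mtilde H act m A)
       \<and> (\<forall>g. \<forall>A\<in>sets borel. mtilde H act m ((\<lambda>x. T (act g x)) -` A) = mtilde H act m A)"
proof -
  interpret haar_average act H m
    by (rule haar_average.intro act_zero[rule_format] act_add[rule_format] act_cont haar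
        prob_space_imp_sigma_finite[OF m_prob] m_sets)+
  have \<beta>_measurable: "\<beta> \<in> H \<rightarrow>\<^sub>M H"
    unfolding measurable_cong_sets[OF sets_H sets_H]
    by (rule borel_measurable_continuous_onI[OF \<beta>_cont])
  have "space H = UNIV"
    using sets_H by (auto dest: sets_eq_imp_space_eq)
  hence "distr H H \<beta> = H"
    using distr_self_if_emeasure_vimage_eq[OF \<beta>_measurable] \<beta>_haar sets_H by simp
  note T_\<beta>_hyps = m_inv[rule_format] equivariant[rule_format] \<beta>_measurable this
  show ?thesis
    by (simp add: mtilde_image_act mtilde_vimage_act_comp[OF T_\<beta>_hyps]
        mtilde_vimage_comp_act[OF T_\<beta>_hyps])
qed

end
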